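(* Let $\mu$ be a finite Borel measure on $\mathbb{R}^d$ and suppose there exists a frame measure $\nu$ for $\mu$ with frame bounds $A,B>0$. Assume in addition that there exist a Borel set $F\subset\mathbb{R}^d$ with $\mu(F)>0$ and a vector $a\in\mathbb{R}^d$ such that $T_a(\mu|_{F+a})\ll\mu$. Then $$\frac{B}{A}\geq\left\|\frac{dT_a(\mu|_{F+a})}{d\mu}\right\|_{L^\infty(\mu)}.$$
   Context: For $t,x\in\mathbb{R}^d$ let $e_t(x)=e^{2\pi i t\cdot x}$. For a finite Borel measure $\mu$ and $f\in L^1(\mu)$, $\widehat{f\,d\mu}(t)=\int f(x)e^{-2\pi i t\cdot x}\,d\mu(x)$. A Borel measure $\nu$ on $\mathbb{R}^d$ is a frame measure for $\mu$ with frame bounds $A,B>0$ if $A\|f\|_{L^2(\mu)}^2\le \|\widehat{f\,d\mu}\|_{L^2(\nu)}^2\le B\|f\|_{L^2(\mu)}^2$ for all $f\in L^2(\mu)$; it is a tight frame measure if one can take $A=B$. For a Borel set $E$, $\mu|_E(G):=\mu(E\cap G)$; for $a\in\mathbb{R}^d$, $T_a\mu(G):=\mu(G+a)$ for Borel $G$ (so $\int f\,dT_a\mu=\int f(x-a)\,d\mu(x)$). $\frac{d\omega}{d\mu}$ denotes the Radon–Nikodym derivative and $\|\cdot\|_{L^\infty(\mu)}$ the $\mu$-essential supremum. *)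

theory Defs
  imports "HOL-Analysis.Analysis" "HOL-Probability.Essential_Supremum"
begin

definition fourier_meas :: "'a::euclidean_space measure \<Rightarrow> ('a \<Rightarrow> complex) \<Rightarrow> 'a \<Rightarrow> complex" where
  "fourier_meas \<mu> f t = (LINT x|\<mu>. f x * cis (- 2 * pi * (t \<bullet> x)))"

definition L2 :: "'a::euclidean_space measure \<Rightarrow> ('a \<Rightarrow> complex) set" where
  "L2 \<mu> = {f. f \<in> borel_measurable \<mu> \<and> integrable \<mu> (\<lambda>x. (cmod (f x))\<^sup>2)}"

definition L2_norm_sq :: "'a::euclidean_space measure \<Rightarrow> ('a \<Rightarrow> complex) \<Rightarrow> real" where
  "L2_norm_sq \<mu> f = (LINT x|\<mu>. (cmod (f x))\<^sup>2)"

text \<open>\<nu> is a frame measure for \<mu> with frame bounds A, B. The L^2(\<nu>) norm of the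
  Fourier transform is taken as an extended nonnegative integral (it may a priori be infinite).\<close>
definition frame_measure :: "'a::euclidean_space measure \<Rightarrow> 'a measure \<Rightarrow> real \<Rightarrow> real \<Rightarrow> bool" where
  "frame_measure \<mu> \<nu> A B \<longleftrightarrow> A > 0 \<and> B > 0 \<and>
     (\<forall>f \<in> L2 \<mu>.
        ennreal (A * L2_norm_sq \<mu> f) \<le> (\<integral>\<^sup>+ t. ennreal ((cmod (fourier_meas \<mu> f t))\<^sup>2) \<partial>\<nu>) \<and>
        (\<integral>\<^sup>+ t. ennreal ((cmod (fourier_meas \<mu> f t))\<^sup>2) \<partial>\<nu>) \<le> ennreal (B * L2_norm_sq \<mu> f))"

definition restr_measure :: "'a measure \<Rightarrow> 'a set \<Rightarrow> 'a measure" where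
  "restr_measure \<mu> E = density \<mu> (indicator E)"

text \<open>Translation T_a \<mu> (G) = \<mu>(G + a), i.e. the push-forward under x \<mapsto> x - a.\<close>
definition translate_measure :: "'a::euclidean_space \<Rightarrow> 'a measure \<Rightarrow> 'a measure" where
  "translate_measure a \<mu> = distr \<mu> borel (\<lambda>x. x - a)"

end

theory Submission
  imports Defs
begin

(*
  Write \<omega> = T\<^sub>a(\<mu>|\<^sub>F\<^sub>') with F' = F + a, and G = d\<omega>/d\<mu> (a real density,
  since \<omega> is finite and \<omega> \<ll> \<mu>).  Integrating against \<omega> in two ways gives the change of
  variables  \<integral> G \<psi> d\<mu> = \<integral> 1\<^sub>F\<^sub>'(x) \<psi>(x - a) d\<mu>(x).  For a Borel set S on which G is bounded,
  applied to \<psi>(y) = 1\<^sub>S(y) e\<^sub>-\<^sub>t(y) this shows that h\<^sub>1 = 1\<^sub>S G and h\<^sub>2 = 1\<^sub>F\<^sub>' 1\<^sub>S(\<cdot> - a) have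
  Fourier transforms of equal modulus, while \<parallel>h\<^sub>2\<parallel>\<^sup>2 = \<integral>\<^sub>S G d\<mu>.  The two frame bounds thus give
      A \<integral>\<^sub>S G\<^sup>2 d\<mu>  \<le>  B \<integral>\<^sub>S G d\<mu>.
  On the level set S = {c < G \<le> n} with c > B/A this forces \<mu>(S) = 0, and letting
  c \<down> B/A and n \<up> \<infinity> bounds the essential supremum of G by B/A.
*)

lemma integral_translate_restr:
  fixes \<psi> :: "'a::euclidean_space \<Rightarrow> 'b::{banach, second_countable_topology}"
  assumes \<mu>: "sets \<mu> = sets borel" and "E \<in> sets borel" and "\<psi> \<in> borel_measurable borel"
  shows "integral\<^sup>L (translate_measure a (restr_measure \<mu> E)) \<psi>
           = (\<integral> x. indicator E x *\<^sub>R \<psi> (x - a) \<partial>\<mu>)"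
proof -
  have "integral\<^sup>L (translate_measure a (restr_measure \<mu> E)) \<psi>
      = integral\<^sup>L (density \<mu> (\<lambda>x. ennreal (indicator E x))) (\<lambda>x. \<psi> (x - a))"
    unfolding translate_measure_def restr_measure_def ennreal_indicator
    by (rule integral_distr) (use assms in \<open>simp_all add: measurable_cong_sets[OF \<mu> refl]\<close>)
  also have "\<dots> = (\<integral> x. indicator E x *\<^sub>R \<psi> (x - a) \<partial>\<mu>)"
    by (rule integral_density) (use assms in \<open>simp_all add: measurable_cong_sets[OF \<mu> refl]\<close>)
  finally show ?thesis .
qed

lemma finite_measure_translate_restr:
  assumes \<mu>: "sets \<mu> = sets borel" "finite_measure \<mu>" and E: "E \<in> sets borel"
  shows "finite_measure (translate_measure a (restr_measure \<mu> E))"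
proof -
  let ?\<omega> = "translate_measure a (restr_measure \<mu> E)"
  have space: "space \<mu> = UNIV" using sets_eq_imp_space_eq[OF \<mu>(1)] by simp
  have "emeasure ?\<omega> (space ?\<omega>) = (\<integral>\<^sup>+ x. indicator E x \<partial>\<mu>)"
    unfolding translate_measure_def restr_measure_def
    using assms by (simp add: emeasure_distr emeasure_density measurable_cong_sets[OF \<mu>(1) refl] space)
  also have "\<dots> = emeasure \<mu> E" using assms by simp
  finally show ?thesis
    using finite_measure.emeasure_finite[OF \<mu>(2)] by (intro finite_measureI) simp
qed

lemma RN_deriv_finite_AE:
  assumes "finite_measure \<mu>" "finite_measure \<omega>" and sets_eq: "sets \<omega> = sets \<mu>"
    and ac: "absolutely_continuous \<mu> \<omega>"
  shows "AE x in \<mu>. RN_deriv \<mu> \<omega> x \<noteq> \<infinity>"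
proof -
  interpret finite_measure \<mu> by fact
  show ?thesis
    by (rule RN_deriv_finite[OF _ ac sets_eq]) (use assms(2) finite_measure_def in auto)
qed

lemma integral_RN_deriv:
  fixes \<psi> :: "'a::euclidean_space \<Rightarrow> 'b::{banach, second_countable_topology}"
  assumes \<mu>: "sets \<mu> = sets borel" "finite_measure \<mu>"
    and \<omega>: "sets \<omega> = sets borel" "finite_measure \<omega>"
    and ac: "absolutely_continuous \<mu> \<omega>" and "\<psi> \<in> borel_measurable borel"
  shows "integral\<^sup>L \<omega> \<psi> = (\<integral> x. enn2real (RN_deriv \<mu> \<omega> x) *\<^sub>R \<psi> x \<partial>\<mu>)"
proof -
  interpret finite_measure \<mu> by (fact \<mu>(2))
  have sets_eq: "sets \<omega> = sets \<mu>" using \<mu> \<omega> by simp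
  note RN_deriv_finite_AE[OF \<mu>(2) \<omega>(2) sets_eq ac]
  then have "density \<mu> (RN_deriv \<mu> \<omega>) = density \<mu> (\<lambda>x. ennreal (enn2real (RN_deriv \<mu> \<omega> x)))"
    by (intro density_cong) (auto simp: less_top)
  then have "integral\<^sup>L \<omega> \<psi> = integral\<^sup>L (density \<mu> (\<lambda>x. ennreal (enn2real (RN_deriv \<mu> \<omega> x)))) \<psi>"
    using density_RN_deriv[OF ac sets_eq] by simp
  also have "\<dots> = (\<integral> x. enn2real (RN_deriv \<mu> \<omega> x) *\<^sub>R \<psi> x \<partial>\<mu>)"
    by (rule integral_density) (use assms in \<open>simp_all add: measurable_cong_sets[OF \<mu>(1) refl]\<close>)
  finally show ?thesis .
qed

lemma RN_deriv_translate_restr_change_of_variables: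
  fixes \<psi> :: "'a::euclidean_space \<Rightarrow> 'b::{banach, second_countable_topology}"
  assumes \<mu>: "sets \<mu> = sets borel" "finite_measure \<mu>" and E: "E \<in> sets borel"
    and ac: "absolutely_continuous \<mu> (translate_measure a (restr_measure \<mu> E))"
    and \<psi>: "\<psi> \<in> borel_measurable borel"
  shows "(\<integral> x. enn2real (RN_deriv \<mu> (translate_measure a (restr_measure \<mu> E)) x) *\<^sub>R \<psi> x \<partial>\<mu>)
           = (\<integral> x. indicator E x *\<^sub>R \<psi> (x - a) \<partial>\<mu>)"
  using integral_RN_deriv[OF \<mu> _ finite_measure_translate_restr[OF \<mu> E] ac \<psi>]
    integral_translate_restr[OF \<mu>(1) E \<psi>]
  by (simp add: translate_measure_def)

text \<open>Two functions whose Fourier transforms have equal modulus satisfy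
  \<open>A \<parallel>h_1\<parallel>^2 \<le> B \<parallel>h_2\<parallel>^2\<close>: combine the lower frame bound for h_1 with the upper one for h_2.\<close>

lemma frame_measure_compare:
  assumes frame: "frame_measure \<mu> \<nu> A B" and "h\<^sub>1 \<in> L2 \<mu>" "h\<^sub>2 \<in> L2 \<mu>"
    and same_modulus: "\<And>t. cmod (fourier_meas \<mu> h\<^sub>1 t) = cmod (fourier_meas \<mu> h\<^sub>2 t)"
  shows "A * L2_norm_sq \<mu> h\<^sub>1 \<le> B * L2_norm_sq \<mu> h\<^sub>2"
proof -
  have "ennreal (A * L2_norm_sq \<mu> h\<^sub>1) \<le> (\<integral>\<^sup>+ t. ennreal ((cmod (fourier_meas \<mu> h\<^sub>1 t))\<^sup>2) \<partial>\<nu>)"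
    using frame assms(2) unfolding frame_measure_def by blast
  also have "\<dots> = (\<integral>\<^sup>+ t. ennreal ((cmod (fourier_meas \<mu> h\<^sub>2 t))\<^sup>2) \<partial>\<nu>)"
    by (simp add: same_modulus)
  also have "\<dots> \<le> ennreal (B * L2_norm_sq \<mu> h\<^sub>2)"
    using frame assms(3) unfolding frame_measure_def by blast
  finally show ?thesis
    using frame by (simp add: ennreal_le_iff frame_measure_def L2_norm_sq_def)
qed

lemma frame_weighted_inequality:
  fixes \<mu> \<nu> :: "'a::euclidean_space measure"
  assumes \<mu>: "sets \<mu> = sets borel" "finite_measure \<mu>" and frame: "frame_measure \<mu> \<nu> A B"
    and E: "E \<in> sets borel"
    and ac: "absolutely_continuous \<mu> (translate_measure a (restr_measure \<mu> E))"
    and G_def: "G = (\<lambda>x. enn2real (RN_deriv \<mu> (translate_measure a (restr_measure \<mu> E)) x))"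
    and S: "S \<in> sets borel" and bounded: "\<And>x. x \<in> S \<Longrightarrow> G x \<le> M"
  shows "A * (\<integral> x. (indicator S x * G x)\<^sup>2 \<partial>\<mu>) \<le> B * (\<integral> x. G x * indicator S x \<partial>\<mu>)"
proof -
  interpret finite_measure \<mu> by fact
  note borel_meas = measurable_cong_sets[OF \<mu>(1) refl]
  have [measurable]: "E \<in> sets borel" "S \<in> sets borel" by fact+
  have [measurable]: "(\<lambda>x. cis (- 2 * pi * (t \<bullet> x))) \<in> borel_measurable borel" for t :: 'a
    by (intro borel_measurable_continuous_onI continuous_intros)
  have G_meas [measurable]: "G \<in> borel_measurable borel"
    unfolding G_def borel_meas[symmetric] by measurable
  have G_nonneg: "G x \<ge> 0" for x unfolding G_def by simp
  have change: "(\<integral> x. G x *\<^sub>R \<psi> x \<partial>\<mu>) = (\<integral> x. indicator E x *\<^sub>R \<psi> (x - a) \<partial>\<mu>)"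
    if "\<psi> \<in> borel_measurable borel" for \<psi> :: "'a \<Rightarrow> 'b::{banach, second_countable_topology}"
    unfolding G_def by (rule RN_deriv_translate_restr_change_of_variables[OF \<mu> E ac that])
  define h\<^sub>1 where "h\<^sub>1 x = complex_of_real (indicator S x * G x)" for x
  define h\<^sub>2 where "h\<^sub>2 x = complex_of_real (indicator E x * indicator S (x - a))" for x
  have same_modulus: "cmod (fourier_meas \<mu> h\<^sub>1 t) = cmod (fourier_meas \<mu> h\<^sub>2 t)" for t
  proof -
    have "fourier_meas \<mu> h\<^sub>1 t = (\<integral> x. G x *\<^sub>R (indicator S x * cis (- 2 * pi * (t \<bullet> x))) \<partial>\<mu>)"
      unfolding fourier_meas_def h\<^sub>1_def
      by (auto simp: scaleR_conv_of_real indicator_def intro!: Bochner_Integration.integral_cong)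
    also have "\<dots> = (\<integral> x. indicator E x *\<^sub>R (indicator S (x - a) * cis (- 2 * pi * (t \<bullet> (x - a)))) \<partial>\<mu>)"
      by (rule change) measurable
    also have "\<dots> = (\<integral> x. cis (2 * pi * (t \<bullet> a)) * (h\<^sub>2 x * cis (- 2 * pi * (t \<bullet> x))) \<partial>\<mu>)"
      by (rule Bochner_Integration.integral_cong)
         (simp_all add: h\<^sub>2_def scaleR_conv_of_real cis_mult inner_diff_right algebra_simps indicator_def)
    also have "\<dots> = cis (2 * pi * (t \<bullet> a)) * fourier_meas \<mu> h\<^sub>2 t"
      unfolding fourier_meas_def by simp
    finally show ?thesis by (simp add: norm_mult)
  qed
  have "h\<^sub>1 \<in> L2 \<mu>"
    unfolding L2_def h\<^sub>1_def borel_meas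
    by (auto intro!: integrable_const_bound[where B="M\<^sup>2"]
             simp: indicator_def borel_meas G_nonneg bounded power_mono)
  moreover have "h\<^sub>2 \<in> L2 \<mu>"
    unfolding L2_def h\<^sub>2_def borel_meas
    by (auto intro!: integrable_const_bound[where B=1] simp: indicator_def borel_meas)
  ultimately have "A * L2_norm_sq \<mu> h\<^sub>1 \<le> B * L2_norm_sq \<mu> h\<^sub>2"
    by (rule frame_measure_compare[OF frame _ _ same_modulus])
  moreover have "L2_norm_sq \<mu> h\<^sub>1 = (\<integral> x. (indicator S x * G x)\<^sup>2 \<partial>\<mu>)"
    unfolding L2_norm_sq_def h\<^sub>1_def by (simp del: of_real_mult add: of_real_mult[symmetric])
  moreover have "L2_norm_sq \<mu> h\<^sub>2 = (\<integral> x. G x * indicator S x \<partial>\<mu>)"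
  proof -
    have "L2_norm_sq \<mu> h\<^sub>2 = (\<integral> x. indicator E x *\<^sub>R indicator S (x - a) \<partial>\<mu>)"
      unfolding L2_norm_sq_def h\<^sub>2_def
      by (rule Bochner_Integration.integral_cong) (auto simp: indicator_def)
    also have "\<dots> = (\<integral> x. G x *\<^sub>R indicator S x \<partial>\<mu>)" by (rule change[symmetric]) simp
    finally show ?thesis by simp
  qed
  ultimately show ?thesis by simp
qed

text \<open>If a nonnegative function G exceeds c > B/A on a set S, is bounded there, and satisfies
  the weighted inequality \<open>A \<integral>_S G^2 \<le> B \<integral>_S G\<close>, then S is a null set: otherwise
  \<open>A c \<integral>_S G \<le> A \<integral>_S G^2 \<le> B \<integral>_S G\<close> with \<open>\<integral>_S G > 0\<close>, i.e. c \<le> B/A.\<close>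

lemma null_set_from_weighted_inequality:
  fixes G :: "'a \<Rightarrow> real"
  assumes "finite_measure \<mu>" and S: "S \<in> sets \<mu>" and G: "G \<in> borel_measurable \<mu>"
    and A: "A > 0" and c: "0 < c" "B / A < c"
    and on_S: "\<And>x. x \<in> S \<Longrightarrow> c < G x \<and> G x \<le> M"
    and weighted: "A * (\<integral> x. (indicator S x * G x)\<^sup>2 \<partial>\<mu>) \<le> B * (\<integral> x. G x * indicator S x \<partial>\<mu>)"
  shows "emeasure \<mu> S = 0"
proof (rule ccontr)
  interpret finite_measure \<mu> by fact
  assume "emeasure \<mu> S \<noteq> 0"
  then have S_pos: "measure \<mu> S > 0"
    using emeasure_eq_measure[of S] by (simp add: zero_less_measure_iff)
  define J where "J = (\<integral> x. G x * indicator S x \<partial>\<mu>)"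
  have int_S: "integrable \<mu> (indicator S :: _ \<Rightarrow> real)"
    using S by (simp add: integrable_indicator_iff less_top[symmetric])
  have int_GS: "integrable \<mu> (\<lambda>x. G x * indicator S x)"
  proof (rule integrable_const_bound[where B="\<bar>M\<bar>"])
    show "AE x in \<mu>. norm (G x * indicator S x) \<le> \<bar>M\<bar>"
      using on_S c(1) by (force simp: indicator_def)
  qed (use G S in simp)
  have "c * measure \<mu> S = (\<integral> x. c * indicator S x \<partial>\<mu>)"
    using S by simp
  also have "\<dots> \<le> J"
    unfolding J_def
  proof (rule integral_mono)
    show "integrable \<mu> (\<lambda>x. c * indicator S x)" using int_S by simp
    show "c * indicator S x \<le> G x * indicator S x" for x
      using on_S[of x] by (auto simp: indicator_def less_imp_le)
  qed (fact int_GS)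
  finally have "c * measure \<mu> S \<le> J" .
  then have J_pos: "J > 0" using mult_pos_pos[OF c(1) S_pos] by linarith
  have "c * J \<le> (\<integral> x. (indicator S x * G x)\<^sup>2 \<partial>\<mu>)"
    unfolding J_def integral_mult_right_zero[symmetric]
  proof (rule integral_mono)
    show "integrable \<mu> (\<lambda>x. (indicator S x * G x)\<^sup>2)"
    proof (rule integrable_const_bound[where B="M\<^sup>2"])
      have "(G x)\<^sup>2 \<le> M\<^sup>2" if "x \<in> S" for x
        using on_S[OF that] c(1) by (intro power_mono) auto
      then show "AE x in \<mu>. norm ((indicator S x * G x)\<^sup>2) \<le> M\<^sup>2"
        by (auto simp: indicator_def)
    qed (use G S in simp)
    show "c * (G x * indicator S x) \<le> (indicator S x * G x)\<^sup>2" for x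
      using on_S[of x] c by (auto simp: indicator_def power2_eq_square intro: mult_right_mono)
  qed (use int_GS in simp)
  then have "A * c * J \<le> B * J"
    using weighted A unfolding J_def by (smt (verit) mult_left_mono mult.assoc)
  then have "c \<le> B / A" using J_pos A by (simp add: field_simps)
  with c(2) show False by simp
qed

lemma esssup_le_from_null_level_sets:
  fixes g :: "'a \<Rightarrow> ennreal"
  assumes g: "g \<in> borel_measurable \<mu>" and finite: "AE x in \<mu>. g x \<noteq> \<infinity>"
    and null: "\<And>n::nat. emeasure \<mu> {x \<in> space \<mu>. K + 1 / Suc n < enn2real (g x) \<and> enn2real (g x) \<le> n} = 0"
  shows "esssup \<mu> g \<le> ennreal K"
proof (rule esssup_I[OF g])
  have "AE x in \<mu>. \<not> (K + 1 / Suc n < enn2real (g x) \<and> enn2real (g x) \<le> n)" for n :: nat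
  proof (rule AE_I')
    have "{x \<in> space \<mu>. K + 1 / Suc n < enn2real (g x) \<and> enn2real (g x) \<le> n} \<in> sets \<mu>"
      using g by measurable
    then show "{x \<in> space \<mu>. K + 1 / Suc n < enn2real (g x) \<and> enn2real (g x) \<le> n} \<in> null_sets \<mu>"
      using null by (simp add: null_sets_def)
  qed auto
  then have "AE x in \<mu>. \<forall>n::nat. \<not> (K + 1 / Suc n < enn2real (g x) \<and> enn2real (g x) \<le> n)"
    by (simp add: AE_all_countable)
  with finite show "AE x in \<mu>. g x \<le> ennreal K"
  proof eventually_elim
    case (elim x)
    have "enn2real (g x) \<le> K"
    proof (rule ccontr)
      assume gap: "\<not> enn2real (g x) \<le> K"
      define n where "n = nat \<lceil>max (enn2real (g x)) (1 / (enn2real (g x) - K))\<rceil>"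
      have "1 / (enn2real (g x) - K) < real (Suc n)" unfolding n_def by linarith
      then have "1 / real (Suc n) < enn2real (g x) - K"
        using gap by (simp add: divide_simps mult.commute split: if_splits)
      moreover have "enn2real (g x) \<le> real n" unfolding n_def by linarith
      ultimately show False using elim(2) by auto
    qed
    then show ?case
      using elim(1) ennreal_leI[of "enn2real (g x)" K] by (simp add: less_top)
  qed
qed

theorem theorem2p2:
  fixes \<mu> \<nu> :: "'a::euclidean_space measure" and A B :: real and F :: "'a set" and a :: 'a
  assumes "sets \<mu> = sets borel" and "finite_measure \<mu>"
    and "sets \<nu> = sets borel"
    and "frame_measure \<mu> \<nu> A B"
    and "F \<in> sets borel" and "emeasure \<mu> F > 0"
    and "absolutely_continuous \<mu> (translate_measure a (restr_measure \<mu> ((\<lambda>x. x + a) ` F)))"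
  shows "ennreal (B / A) \<ge>
           esssup \<mu> (RN_deriv \<mu> (translate_measure a (restr_measure \<mu> ((\<lambda>x. x + a) ` F))))"
proof -
  define \<omega> where "\<omega> = translate_measure a (restr_measure \<mu> ((\<lambda>x. x + a) ` F))"
  define G where "G x = enn2real (RN_deriv \<mu> \<omega> x)" for x
  have AB: "A > 0" "B > 0" using assms(4) unfolding frame_measure_def by auto
  have meas: "borel_measurable \<mu> = borel_measurable borel"
    by (rule measurable_cong_sets[OF assms(1) refl])
  have "(\<lambda>x. x + a) ` F = (\<lambda>x. x - a) -` F" by (force simp: image_iff algebra_simps)
  then have shifted_F: "(\<lambda>x. x + a) ` F \<in> sets borel"
    using measurable_sets[of "\<lambda>x. x - a" borel borel F] assms(5) by simp
  have G_meas: "G \<in> borel_measurable borel" unfolding G_def[abs_def] meas[symmetric] by simp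
  have "emeasure \<mu> {x \<in> space \<mu>. B / A + 1 / Suc n < G x \<and> G x \<le> n} = 0" for n :: nat
  proof (rule null_set_from_weighted_inequality[OF assms(2) _ _ AB(1), where c="B / A + 1 / Suc n" and M=n])
    let ?S = "{x \<in> space \<mu>. B / A + 1 / Suc n < G x \<and> G x \<le> n}"
    have S: "?S \<in> sets borel" using G_meas by (simp add: sets_eq_imp_space_eq[OF assms(1)])
    then show "?S \<in> sets \<mu>" using assms(1) by simp
    show "A * (\<integral> x. (indicator ?S x * G x)\<^sup>2 \<partial>\<mu>) \<le> B * (\<integral> x. G x * indicator ?S x \<partial>\<mu>)"
      by (rule frame_weighted_inequality[OF assms(1,2,4) shifted_F assms(7) _ S, where M=n])
         (auto simp: G_def[abs_def] \<omega>_def)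
  qed (use G_meas meas AB in \<open>auto intro: add_pos_pos\<close>)
  moreover have "AE x in \<mu>. RN_deriv \<mu> \<omega> x \<noteq> \<infinity>"
  proof (rule RN_deriv_finite_AE[OF assms(2)])
    show "finite_measure \<omega>"
      unfolding \<omega>_def by (rule finite_measure_translate_restr[OF assms(1,2) shifted_F])
  qed (use assms(1,7) in \<open>simp_all add: \<omega>_def translate_measure_def\<close>)
  ultimately show ?thesis
    unfolding \<omega>_def[symmetric]
    by (intro esssup_le_from_null_level_sets) (simp_all add: G_def)
qed

end
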